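(* Let $R$ be a Noetherian local ring, $I,J$ ideals of $R$ and $K\subseteq I$ an ideal. Let $\bar J=(J+K)/K$ and $\bar I=I/K$ in $R/K$. Then $\operatorname{ar}_{\bar J}(\bar I)\le\operatorname{ar}_J(I)$.
   Context: For ideals $\mathfrak a,\mathfrak b$ of a Noetherian local ring, $\operatorname{ar}_{\mathfrak b}(\mathfrak a)$ is the least $c$ such that $\mathfrak b^n\cap\mathfrak a=\mathfrak b^{n-c}(\mathfrak b^c\cap\mathfrak a)$ for all $n\ge c$. *)

theory Defs
  imports "HOL-Algebra.Algebra" "HOL-Library.Extended_Nat"
begin

definition local_ring :: "('a, 'b) ring_scheme \<Rightarrow> bool" where
  "local_ring R \<longleftrightarrow> cring R \<and> (\<exists>!M. maximalideal M R)"

primrec ideal_pow :: "('a, 'b) ring_scheme \<Rightarrow> 'a set \<Rightarrow> nat \<Rightarrow> 'a set" where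
  "ideal_pow R J 0 = carrier R"
| "ideal_pow R J (Suc n) = ideal_prod R J (ideal_pow R J n)"

definition quot_ideal :: "('a, 'b) ring_scheme \<Rightarrow> 'a set \<Rightarrow> 'a set \<Rightarrow> 'a set set" where
  "quot_ideal R K A = (\<lambda>a. K +>\<^bsub>R\<^esub> a) ` A"

text \<open>The Artin--Rees number ar_J(I): least c with J^n \<inter> I = J^(n-c) (J^c \<inter> I)
  for all n \<ge> c; value \<infinity> if no such c exists (never the case in a Noetherian ring).\<close>
definition artin_rees_number :: "('a, 'b) ring_scheme \<Rightarrow> 'a set \<Rightarrow> 'a set \<Rightarrow> enat" where
  "artin_rees_number R J I =
     (INF c \<in> {c::nat. \<forall>n\<ge>c. ideal_pow R J n \<inter> I =
                  ideal_prod R (ideal_pow R J (n - c)) (ideal_pow R J c \<inter> I)}. enat c)"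

end

theory Submission
  imports Defs
begin

text \<open>For a surjective ring
  homomorphism \<open>h\<close> whose kernel lies in \<open>I\<close>, the image of \<open>J\<^sup>n\<close> is \<open>(h J)\<^sup>n\<close>, and taking
  images commutes with intersecting with \<open>I\<close>. So \<open>h\<close> maps every Artin--Rees identity for
  \<open>(J, I)\<close> with exponent \<open>c\<close> to one for \<open>(h J, h I)\<close> with the same \<open>c\<close>. The quotient map
  \<open>R \<rightarrow> R/K\<close> is such an \<open>h\<close>, and it sends \<open>J + K\<close> and \<open>J\<close> to the same ideal.\<close>

definition artin_rees_exponent :: "('a, 'b) ring_scheme \<Rightarrow> 'a set \<Rightarrow> 'a set \<Rightarrow> nat \<Rightarrow> bool" where
  "artin_rees_exponent R J I c \<longleftrightarrow>
     (\<forall>n\<ge>c. ideal_pow R J n \<inter> I = ideal_prod R (ideal_pow R J (n - c)) (ideal_pow R J c \<inter> I))"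

lemma artin_rees_number_mono:
  assumes "\<And>c. artin_rees_exponent R J I c \<Longrightarrow> artin_rees_exponent S J' I' c"
  shows "artin_rees_number S J' I' \<le> artin_rees_number R J I"
  unfolding artin_rees_number_def artin_rees_exponent_def[symmetric]
  using assms by (intro INF_superset_mono) auto

lemma (in ring) ideal_prod_subset_carrier:
  assumes "A \<subseteq> carrier R" "B \<subseteq> carrier R"
  shows "ideal_prod R A B \<subseteq> carrier R"
proof
  fix s assume "s \<in> ideal_prod R A B"
  then show "s \<in> carrier R"
    by (induct s rule: ideal_prod.induct) (use assms in auto)
qed

lemma (in ring) ideal_pow_subset_carrier:
  assumes "J \<subseteq> carrier R"
  shows "ideal_pow R J n \<subseteq> carrier R"
  by (induct n) (simp_all add: assms ideal_prod_subset_carrier)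

lemma (in ring_hom_ring) image_ideal_prod:
  assumes A: "A \<subseteq> carrier R" and B: "B \<subseteq> carrier R"
  shows "h ` ideal_prod R A B = ideal_prod S (h ` A) (h ` B)"
proof (intro equalityI subsetI)
  fix y assume "y \<in> h ` ideal_prod R A B"
  then obtain s where s: "s \<in> ideal_prod R A B" and y: "y = h s" by blast
  from s have "h s \<in> ideal_prod S (h ` A) (h ` B)"
  proof (induct s rule: ideal_prod.induct)
    case (prod a b)
    then have "a \<in> carrier R" "b \<in> carrier R" using A B by auto
    with prod show ?case by (auto intro: ideal_prod.prod)
  next
    case (sum s1 s2)
    then have "s1 \<in> carrier R" "s2 \<in> carrier R"
      using R.ideal_prod_subset_carrier[OF A B] by auto
    with sum show ?case by (auto intro: ideal_prod.sum)
  qed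
  with y show "y \<in> ideal_prod S (h ` A) (h ` B)" by simp
next
  fix y assume "y \<in> ideal_prod S (h ` A) (h ` B)"
  then show "y \<in> h ` ideal_prod R A B"
  proof (induct y rule: ideal_prod.induct)
    case (prod i j)
    then obtain a b where ab: "a \<in> A" "b \<in> B" "i = h a" "j = h b" by blast
    then have "a \<in> carrier R" "b \<in> carrier R" using A B by auto
    with ab have "i \<otimes>\<^bsub>S\<^esub> j = h (a \<otimes> b)" and "a \<otimes> b \<in> ideal_prod R A B"
      by (auto intro: ideal_prod.prod)
    then show ?case by blast
  next
    case (sum s1 s2)
    then obtain a b where ab: "a \<in> ideal_prod R A B" "b \<in> ideal_prod R A B" "s1 = h a" "s2 = h b"
      by blast
    then have "a \<in> carrier R" "b \<in> carrier R"
      using R.ideal_prod_subset_carrier[OF A B] by auto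
    with ab have "s1 \<oplus>\<^bsub>S\<^esub> s2 = h (a \<oplus> b)" and "a \<oplus> b \<in> ideal_prod R A B"
      by (auto intro: ideal_prod.sum)
    then show ?case by blast
  qed
qed

lemma (in ring_hom_ring) image_ideal_pow:
  assumes surj: "h ` carrier R = carrier S" and J: "J \<subseteq> carrier R"
  shows "h ` ideal_pow R J n = ideal_pow S (h ` J) n"
  by (induct n) (simp_all add: surj image_ideal_prod J R.ideal_pow_subset_carrier)

lemma (in ring_hom_ring) image_Int_kernel_subset:
  assumes I: "ideal I R" and ker: "a_kernel R S h \<subseteq> I" and A: "A \<subseteq> carrier R"
  shows "h ` (A \<inter> I) = h ` A \<inter> h ` I"
proof (intro equalityI subsetI)
  fix y assume "y \<in> h ` A \<inter> h ` I"
  then obtain a b where a: "a \<in> A" and b: "b \<in> I" and hab: "y = h a" "y = h b" by blast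
  have "a \<in> a_kernel R S h +> b"
    using a A b ideal.Icarr[OF I] hab by (intro homeq_imp_rcos) auto
  then obtain k where "k \<in> I" and "a = k \<oplus> b"
    using ker by (auto simp: a_r_coset_def')
  then have "a \<in> I"
    using b additive_subgroup.a_closed[OF ideal.axioms(1)[OF I]] by simp
  with a hab show "y \<in> h ` (A \<inter> I)" by blast
qed blast

lemma (in ring_hom_ring) artin_rees_exponent_image:
  assumes surj: "h ` carrier R = carrier S" and I: "ideal I R" and J: "J \<subseteq> carrier R"
    and ker: "a_kernel R S h \<subseteq> I" and c: "artin_rees_exponent R J I c"
  shows "artin_rees_exponent S (h ` J) (h ` I) c"
  unfolding artin_rees_exponent_def
proof (intro allI impI)
  fix n assume "c \<le> n"
  note pow_carrier = R.ideal_pow_subset_carrier[OF J]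
  have image_pow_Int: "h ` (ideal_pow R J m \<inter> I) = ideal_pow S (h ` J) m \<inter> h ` I" for m
    by (simp only: image_Int_kernel_subset[OF I ker pow_carrier] image_ideal_pow[OF surj J])
  have "ideal_pow S (h ` J) n \<inter> h ` I = h ` (ideal_pow R J n \<inter> I)"
    by (rule image_pow_Int[symmetric])
  also have "\<dots> = h ` ideal_prod R (ideal_pow R J (n - c)) (ideal_pow R J c \<inter> I)"
    using c \<open>c \<le> n\<close> unfolding artin_rees_exponent_def by blast
  also have "\<dots> = ideal_prod S (h ` ideal_pow R J (n - c)) (h ` (ideal_pow R J c \<inter> I))"
    using pow_carrier by (intro image_ideal_prod) auto
  also have "\<dots> = ideal_prod S (ideal_pow S (h ` J) (n - c)) (ideal_pow S (h ` J) c \<inter> h ` I)"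
    by (simp only: image_ideal_pow[OF surj J] image_pow_Int)
  finally show "ideal_pow S (h ` J) n \<inter> h ` I =
      ideal_prod S (ideal_pow S (h ` J) (n - c)) (ideal_pow S (h ` J) c \<inter> h ` I)" .
qed

lemma (in ring_hom_ring) artin_rees_number_image_le:
  assumes "h ` carrier R = carrier S" "ideal I R" "J \<subseteq> carrier R" "a_kernel R S h \<subseteq> I"
  shows "artin_rees_number S (h ` J) (h ` I) \<le> artin_rees_number R J I"
  using artin_rees_exponent_image[OF assms] by (rule artin_rees_number_mono)

lemma (in ideal) rcos_image_carrier: "(+>) I ` carrier R = carrier (R Quot I)"
  by (auto simp add: FactRing_def A_RCOSETS_def')

lemma (in ideal) rcos_ring_hom_kernel: "a_kernel R (R Quot I) ((+>) I) = I"
proof (intro equalityI subsetI)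
  fix x assume "x \<in> a_kernel R (R Quot I) ((+>) I)"
  then have "x \<in> carrier R" "I +> x = I" by (simp_all add: a_kernel_def' FactRing_def)
  then show "x \<in> I" by (rule rcos_const_imp_mem)
next
  fix x assume "x \<in> I"
  then show "x \<in> a_kernel R (R Quot I) ((+>) I)"
    using a_rcos_zero[OF ideal_axioms] by (simp add: a_kernel_def' FactRing_def)
qed

theorem lemma2p6:
  fixes R :: "('a, 'b) ring_scheme" and I J K :: "'a set"
  assumes "noetherian_ring R" and "local_ring R"
    and "ideal I R" and "ideal J R" and "ideal K R" and "K \<subseteq> I"
  shows "artin_rees_number (R Quot K) (quot_ideal R K (J <+>\<^bsub>R\<^esub> K)) (quot_ideal R K I)
           \<le> artin_rees_number R J I"
proof -
  interpret K: ideal K R by fact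
  interpret q: ring_hom_ring R "R Quot K" "(+>\<^bsub>R\<^esub>) K" by (rule K.rcos_ring_hom_ring)
  have J: "J \<subseteq> carrier R" using ideal.Icarr[OF \<open>ideal J R\<close>] by blast
  have ker: "a_kernel R (R Quot K) ((+>\<^bsub>R\<^esub>) K) = K" by (rule K.rcos_ring_hom_kernel)
  have sum: "(+>\<^bsub>R\<^esub>) K ` (J <+>\<^bsub>R\<^esub> K) = (+>\<^bsub>R\<^esub>) K ` J"
    using q.set_add_ker_hom(1)[OF J] unfolding ker .
  have "artin_rees_number (R Quot K) ((+>\<^bsub>R\<^esub>) K ` J) ((+>\<^bsub>R\<^esub>) K ` I)
      \<le> artin_rees_number R J I"
    using q.artin_rees_number_image_le[OF K.rcos_image_carrier \<open>ideal I R\<close> J] ker \<open>K \<subseteq> I\<close>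
    by simp
  then show ?thesis unfolding quot_ideal_def sum .
qed

end
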